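(* $N(k,3) = 2k$ for all integers $k \geq 9$.
   Context: A $k$-power is a word of the form $u^k$ (concatenation of $k$ copies of $u$) with $u$ nonempty. A $3$-antipower is a word $u_1u_2u_3$ with $|u_1|=|u_2|=|u_3|$ and $u_1,u_2,u_3$ pairwise distinct. $N(k,r)$ is the smallest integer $\ell$ such that every binary word of length $\ell$ contains either a $k$-power or an $r$-antipower as a factor (contiguous subword). *)

theory Defs
  imports Main
begin

definition is_factor :: "'a list \<Rightarrow> 'a list \<Rightarrow> bool" where
  "is_factor v w \<longleftrightarrow> (\<exists>x y. w = x @ v @ y)"

definition is_power :: "nat \<Rightarrow> 'a list \<Rightarrow> bool" where
  "is_power k w \<longleftrightarrow> (\<exists>u. u \<noteq> [] \<and> w = concat (replicate k u))"

definition is_antipower :: "nat \<Rightarrow> 'a list \<Rightarrow> bool" where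
  "is_antipower r w \<longleftrightarrow> (\<exists>us. length us = r \<and> w = concat us \<and> distinct us \<and>
       (\<forall>u\<in>set us. \<forall>v\<in>set us. length u = length v))"

definition N :: "nat \<Rightarrow> nat \<Rightarrow> nat" where
  "N k r = (LEAST l. \<forall>w :: bool list. length w = l \<longrightarrow>
      (\<exists>v. is_factor v w \<and> (is_power k v \<or> is_antipower r v)))"

end

theory Submission
  imports Defs
begin

text \<open>
  The word a^(k-1) b a^(k-1) of length 2k - 1 has no k-power factor, since a k-power with at
  most one letter b is a run of k letters a, and no 3-antipower factor, since two of its three
  blocks would be equal powers of a.

  Conversely let w be a binary word of length 2k without such factors. Enumerating the
  3-antipower-free binary words of lengths 12 and 13 shows that every window of length 12 of w
  either alternates or has a majority letter c with at most one other letter in its interior,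
  and that overlapping windows are of the same kind. If all windows alternate, then w = (ab)^k.
  Otherwise take the letters p < k <= q different from c that are closest to the middle of w;
  they exist and satisfy q - p <= k because c^k is no factor of w, and q - p >= 7 by the
  property of the windows. Three consecutive blocks of length about (q - p)/3 whose middle block
  lies inside the run of c between p and q then form a 3-antipower.
\<close>

definition power_antipower_free :: "nat \<Rightarrow> nat \<Rightarrow> 'a list \<Rightarrow> bool" where
  "power_antipower_free k r w \<longleftrightarrow> (\<forall>v. is_factor v w \<longrightarrow> \<not> is_power k v \<and> \<not> is_antipower r v)"

lemma is_factor_refl: "is_factor w w"
  unfolding is_factor_def by (metis append_Nil append_Nil2)

lemma is_factor_trans: "is_factor u v \<Longrightarrow> is_factor v w \<Longrightarrow> is_factor u w"
  unfolding is_factor_def by (metis append.assoc)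

lemma is_factor_take: "is_factor (take n w) w"
  unfolding is_factor_def by (metis append_Nil append_take_drop_id)

lemma power_antipower_free_factor:
  "power_antipower_free k r w \<Longrightarrow> is_factor v w \<Longrightarrow> power_antipower_free k r v"
  unfolding power_antipower_free_def using is_factor_trans by blast

lemma N_eqI:
  fixes w\<^sub>0 :: "bool list"
  assumes "power_antipower_free k r w\<^sub>0"
    and "\<And>w :: bool list. length w = Suc (length w\<^sub>0) \<Longrightarrow> \<not> power_antipower_free k r w"
  shows "N k r = Suc (length w\<^sub>0)"
proof -
  have "N k r = (LEAST l. \<forall>w :: bool list. length w = l \<longrightarrow> \<not> power_antipower_free k r w)"
    unfolding N_def power_antipower_free_def by meson
  also have "\<dots> = Suc (length w\<^sub>0)"
  proof (rule Least_equality)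
    show "\<forall>w :: bool list. length w = Suc (length w\<^sub>0) \<longrightarrow> \<not> power_antipower_free k r w"
      using assms(2) by blast
  next
    fix l assume shorter: "\<forall>w :: bool list. length w = l \<longrightarrow> \<not> power_antipower_free k r w"
    show "Suc (length w\<^sub>0) \<le> l"
    proof (rule ccontr)
      assume "\<not> Suc (length w\<^sub>0) \<le> l"
      then have "length (take l w\<^sub>0) = l" by simp
      moreover have "power_antipower_free k r (take l w\<^sub>0)"
        using power_antipower_free_factor[OF assms(1) is_factor_take] .
      ultimately show False using shorter by blast
    qed
  qed
  finally show ?thesis .
qed

subsection \<open>Lower bound\<close>

lemma length_filter_concat_replicate:
  "length (filter P (concat (replicate k u))) = k * length (filter P u)"
  by (induction k) simp_all

lemma is_factor_length_filter_le: "is_factor v w \<Longrightarrow> length (filter P v) \<le> length (filter P w)"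
  unfolding is_factor_def by auto

lemma is_factor_avoiding_letter:
  assumes "is_factor v (xs @ b # ys)" "b \<notin> set v"
  shows "length v \<le> max (length xs) (length ys)"
proof -
  obtain x y where split: "x @ v @ y = xs @ b # ys"
    using assms(1) unfolding is_factor_def by metis
  have lengths: "length x + length v + length y = length xs + 1 + length ys"
    using arg_cong[OF split, of length] by simp
  have "\<not> (length x \<le> length xs \<and> length xs < length x + length v)"
  proof
    assume inside: "length x \<le> length xs \<and> length xs < length x + length v"
    then have "v ! (length xs - length x) = (x @ v @ y) ! length xs"
      by (auto simp: nth_append)
    also have "\<dots> = b" unfolding split by simp
    finally have "b \<in> set v" using inside by (metis less_diff_conv2 add.commute nth_mem)
    with assms(2) show False ..
  qed
  then show ?thesis using lengths by linarith
qed

lemma is_antipower_3_filter_neq: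
  assumes "is_antipower 3 v"
  shows "2 \<le> length (filter (\<lambda>x. x \<noteq> a) v)"
proof -
  obtain us where us: "length us = 3" "v = concat us" "distinct us"
    "\<forall>u \<in> set us. \<forall>u' \<in> set us. length u = length u'"
    using assms unfolding is_antipower_def by blast
  then obtain u\<^sub>1 u\<^sub>2 u\<^sub>3 where us_eq: "us = [u\<^sub>1, u\<^sub>2, u\<^sub>3]"
    by (auto simp: numeral_3_eq_3 length_Suc_conv)
  have v: "v = u\<^sub>1 @ u\<^sub>2 @ u\<^sub>3" and distinct: "distinct [u\<^sub>1, u\<^sub>2, u\<^sub>3]"
    using us(2,3) unfolding us_eq by simp_all
  have lengths: "length u\<^sub>1 = length u\<^sub>2" "length u\<^sub>2 = length u\<^sub>3"
    using us(4) unfolding us_eq by (meson list.set_intros)+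
  have uniform: "u = replicate (length u) a" if "filter (\<lambda>x. x \<noteq> a) u = []" for u
    using that by (simp add: filter_empty_conv replicate_length_same)
  show ?thesis
    using uniform[of u\<^sub>1] uniform[of u\<^sub>2] uniform[of u\<^sub>3] distinct lengths unfolding v
    by (cases "filter (\<lambda>x. x \<noteq> a) u\<^sub>1"; cases "filter (\<lambda>x. x \<noteq> a) u\<^sub>2";
        cases "filter (\<lambda>x. x \<noteq> a) u\<^sub>3") auto
qed

lemma power_antipower_free_isolated_letter:
  assumes "2 \<le> k" "b \<noteq> a"
  shows "power_antipower_free k 3 (replicate (k - 1) a @ b # replicate (k - 1) a)"
    (is "power_antipower_free k 3 ?w")
  unfolding power_antipower_free_def
proof (intro allI impI conjI notI)
  fix v assume factor: "is_factor v ?w"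
  have few: "length (filter (\<lambda>x. x \<noteq> a) v) \<le> 1"
    using is_factor_length_filter_le[OF factor, of "\<lambda>x. x \<noteq> a"] assms(2) by simp
  then show "is_antipower 3 v \<Longrightarrow> False"
    using is_antipower_3_filter_neq[of v a] by linarith
  assume "is_power k v"
  then obtain u where "u \<noteq> []" and v: "v = concat (replicate k u)"
    unfolding is_power_def by blast
  then have "1 \<le> length u" by (simp add: Suc_le_eq)
  then have "k \<le> length v" unfolding v by (simp add: length_concat sum_list_replicate)
  have "length (filter (\<lambda>x. x \<noteq> a) v) = k * length (filter (\<lambda>x. x \<noteq> a) u)"
    unfolding v by (rule length_filter_concat_replicate)
  with few assms(1) have "filter (\<lambda>x. x \<noteq> a) v = []" by (cases "filter (\<lambda>x. x \<noteq> a) u") auto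
  then have "b \<notin> set v" using assms(2) by (auto simp: filter_empty_conv)
  then have "length v \<le> k - 1" using is_factor_avoiding_letter[OF factor] by simp
  with \<open>k \<le> length v\<close> assms(1) show False by simp
qed

definition window :: "'a list \<Rightarrow> nat \<Rightarrow> nat \<Rightarrow> 'a list" where
  "window w i m = take m (drop i w)"

lemma length_window: "i + m \<le> length w \<Longrightarrow> length (window w i m) = m"
  by (simp add: window_def)

lemma nth_window: "j < m \<Longrightarrow> i + j < length w \<Longrightarrow> window w i m ! j = w ! (i + j)"
  by (simp add: window_def)

lemma is_factor_window: "is_factor (window w i m) w"
  unfolding is_factor_def window_def by (metis append_take_drop_id)

lemma window_window: "j + m \<le> n \<Longrightarrow> window (window w i n) j m = window w (i + j) m"
  by (simp add: window_def take_drop min_def add.commute)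

lemma window_add: "window w i (m + n) = window w i m @ window w (i + m) n"
  by (simp add: window_def take_add add.commute)

lemma take_window: "m \<le> n \<Longrightarrow> take m (window w i n) = window w i m"
  by (simp add: window_def min_def)

lemma tl_window: "tl (window w i (Suc n)) = window w (Suc i) n"
  by (simp add: window_def tl_take tl_drop drop_Suc)

definition antipower3_at :: "'a list \<Rightarrow> nat \<Rightarrow> nat \<Rightarrow> bool" where
  "antipower3_at w i m \<longleftrightarrow> distinct [window w i m, window w (i + m) m, window w (i + 2 * m) m]"

definition antipower3_free :: "'a list \<Rightarrow> bool" where
  "antipower3_free w \<longleftrightarrow> (\<forall>i m. 0 < m \<longrightarrow> i + 3 * m \<le> length w \<longrightarrow> \<not> antipower3_at w i m)"

lemma antipower3_at_is_antipower:
  assumes "0 < m" "i + 3 * m \<le> length w" "antipower3_at w i m"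
  shows "is_antipower 3 (window w i (3 * m))"
  unfolding is_antipower_def
proof (intro exI conjI)
  let ?us = "[window w i m, window w (i + m) m, window w (i + 2 * m) m]"
  show "window w i (3 * m) = concat ?us"
    using window_add[of w i m "2 * m"] window_add[of w "i + m" m m]
    by (simp add: mult_2 numeral_3_eq_3 add.assoc)
  show "\<forall>u \<in> set ?us. \<forall>v \<in> set ?us. length u = length v"
    using assms(2) by (simp add: length_window)
qed (use assms(3) in \<open>simp_all add: antipower3_at_def\<close>)

lemma power_antipower_free_antipower3_free:
  "power_antipower_free k 3 w \<Longrightarrow> antipower3_free w"
  unfolding antipower3_free_def power_antipower_free_def
  using antipower3_at_is_antipower is_factor_window by blast

lemma antipower3_free_window: "antipower3_free w \<Longrightarrow> antipower3_free (window w s n)"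
  unfolding antipower3_free_def
proof (intro allI impI)
  fix i m assume free: "\<forall>i m. 0 < m \<longrightarrow> i + 3 * m \<le> length w \<longrightarrow> \<not> antipower3_at w i m"
    and "0 < m" "i + 3 * m \<le> length (window w s n)"
  then have "i + 3 * m \<le> n" "s + i + 3 * m \<le> length w" by (auto simp: window_def)
  then have "antipower3_at (window w s n) i m = antipower3_at w (s + i) m"
    by (simp add: antipower3_at_def window_window add.assoc)
  with free \<open>0 < m\<close> \<open>s + i + 3 * m \<le> length w\<close> show "\<not> antipower3_at (window w s n) i m"
    by (simp add: add.assoc)
qed

text \<open>The first block differs from the other two at the offset of \<open>p\<close>, the last one from
  the middle one at the offset of \<open>q\<close>.\<close>

lemma run_antipower3_at:
  assumes "w ! p \<noteq> c" "w ! q \<noteq> c" "\<forall>i. p < i \<longrightarrow> i < q \<longrightarrow> w ! i = c"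
    and "s \<le> p" "p < s + m" "p + 2 * m < q" "q < s + 3 * m" "s + 3 * m \<le> length w"
  shows "antipower3_at w s m"
proof -
  define j d where "j = p - s" and "d = q - (s + 2 * m)"
  have "j < m" "d < m" "s + j = p" "s + 2 * m + d = q"
    using assms(4-7) by (simp_all add: j_def d_def)
  have run: "w ! (s + m + j) = c" "w ! (s + 2 * m + j) = c" "w ! (s + m + d) = c"
    using \<open>s + j = p\<close> \<open>s + 2 * m + d = q\<close> \<open>j < m\<close> \<open>d < m\<close> assms(6)
    by (auto intro!: assms(3)[rule_format])
  have "window w s m ! j = w ! p" "window w (s + m) m ! j = w ! (s + m + j)"
    "window w (s + 2 * m) m ! j = w ! (s + 2 * m + j)"
    "window w (s + m) m ! d = w ! (s + m + d)" "window w (s + 2 * m) m ! d = w ! q"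
    using \<open>j < m\<close> \<open>d < m\<close> \<open>s + j = p\<close> \<open>s + 2 * m + d = q\<close> assms(8)
    by (simp_all add: nth_window)
  then show ?thesis
    unfolding antipower3_at_def using assms(1,2) run by auto
qed

fun alternating :: "'a list \<Rightarrow> bool" where
  "alternating (a # b # w) \<longleftrightarrow> a \<noteq> b \<and> alternating (b # w)"
| "alternating _ \<longleftrightarrow> True"

lemma alternating_iff_nth: "alternating w \<longleftrightarrow> (\<forall>i. Suc i < length w \<longrightarrow> w ! i \<noteq> w ! Suc i)"
  by (induction w rule: alternating.induct) (auto simp: nth_Cons split: nat.split)

lemma alternating_windows:
  assumes "2 \<le> n" "n \<le> length w" "\<And>s. s + n \<le> length w \<Longrightarrow> alternating (window w s n)"
  shows "alternating w"
  unfolding alternating_iff_nth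
proof (intro allI impI)
  fix i assume "Suc i < length w"
  define s where "s = min i (length w - n)"
  have "s + n \<le> length w" "s \<le> i" "Suc (i - s) < n"
    using assms(1,2) \<open>Suc i < length w\<close> by (auto simp: s_def)
  then have "window w s n ! (i - s) \<noteq> window w s n ! Suc (i - s)"
    using assms(3) length_window unfolding alternating_iff_nth by metis
  then show "w ! i \<noteq> w ! Suc i"
    using \<open>s + n \<le> length w\<close> \<open>s \<le> i\<close> \<open>Suc (i - s) < n\<close> by (simp add: nth_window)
qed

lemma alternating_Cons_eq_concat_replicate:
  "alternating (a # w) \<Longrightarrow> length (a # w) = 2 * k \<Longrightarrow> a # w = concat (replicate k [a, \<not> a])"
proof (induction k arbitrary: w)
  case 0
  then show ?case by simp
next
  case (Suc k)
  then obtain w' where w: "w = (\<not> a) # w'" "length w' = 2 * k"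
    by (cases w) auto
  show ?case
  proof (cases w')
    case Nil
    with w show ?thesis by simp
  next
    case (Cons b w'')
    with Suc.prems w have "b = a" "alternating (a # w'')" by auto
    with Suc.IH[of w''] w Cons show ?thesis by simp
  qed
qed

lemma alternating_is_power: "alternating (w :: bool list) \<Longrightarrow> length w = 2 * k \<Longrightarrow> is_power k w"
  unfolding is_power_def
  by (cases w) (auto dest: alternating_Cons_eq_concat_replicate)

subsection \<open>Windows of length 12\<close>

definition antipower3_suffix :: "'a list \<Rightarrow> bool" where
  "antipower3_suffix w \<longleftrightarrow> (\<exists>m. 0 < m \<and> 3 * m \<le> length w \<and> antipower3_at w (length w - 3 * m) m)"

lemma antipower3_suffix_code [code]:
  "antipower3_suffix w \<longleftrightarrow> list_ex (\<lambda>m. antipower3_at w (length w - 3 * m) m) [1..<length w div 3 + 1]"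
proof -
  have "0 < m \<and> 3 * m \<le> length w \<longleftrightarrow> m \<in> set [1..<length w div 3 + 1]" for m
    by auto
  then show ?thesis unfolding antipower3_suffix_def list_ex_iff by blast
qed

fun antipower3_free_words :: "nat \<Rightarrow> bool list list" where
  "antipower3_free_words 0 = [[]]"
| "antipower3_free_words (Suc n) =
     filter (\<lambda>v. \<not> antipower3_suffix v) (concat (map (\<lambda>v. [v @ [False], v @ [True]]) (antipower3_free_words n)))"

lemma antipower3_free_in_words:
  "antipower3_free v \<Longrightarrow> v \<in> set (antipower3_free_words (length v))"
proof (induction v rule: rev_induct)
  case Nil
  then show ?case by simp
next
  case (snoc e v)
  have "window (v @ [e]) 0 (length v) = v" by (simp add: window_def)
  then have "antipower3_free v" using antipower3_free_window[OF snoc.prems] by metis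
  then have "v \<in> set (antipower3_free_words (length v))" by (rule snoc.IH)
  moreover have "\<not> antipower3_suffix (v @ [e])"
    using snoc.prems unfolding antipower3_free_def antipower3_suffix_def by auto
  ultimately show ?case by (cases e) auto
qed

text \<open>\<open>Some c\<close> records the majority letter \<open>c\<close> of a word that does not alternate.\<close>

definition kind :: "bool list \<Rightarrow> bool option" where
  "kind v = (if alternating v then None else Some (length v < 2 * count_list v True))"

lemma kind_slide_words: "list_all (\<lambda>v. kind (take 12 v) = kind (tl v)) (antipower3_free_words 13)"
  by code_simp

lemma kind_interior_words:
  "list_all (\<lambda>v. \<forall>c. kind v = Some c \<longrightarrow>
      list_all (\<lambda>a. list_all (\<lambda>b. v ! a = c \<or> v ! b = c) [Suc a..<11]) [1..<11])
    (antipower3_free_words 12)"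
  by code_simp

lemma kind_window_Suc:
  assumes "antipower3_free w" "s + 13 \<le> length w"
  shows "kind (window w (Suc s) 12) = kind (window w s 12)"
proof -
  let ?v = "window w s 13"
  have "?v \<in> set (antipower3_free_words 13)"
    using antipower3_free_in_words[OF antipower3_free_window[OF assms(1)]] length_window[OF assms(2)]
    by metis
  then have "kind (take 12 ?v) = kind (tl ?v)"
    using kind_slide_words by (simp add: list_all_iff)
  moreover have "tl ?v = window w (Suc s) 12" using tl_window[of w s 12] by simp
  ultimately show ?thesis by (simp add: take_window)
qed

lemma kind_window_eq:
  assumes "antipower3_free w" "s + 12 \<le> length w"
  shows "kind (window w s 12) = kind (window w 0 12)"
  using assms(2)
proof (induction s)
  case 0
  then show ?case by simp
next
  case (Suc s)
  then show ?case using kind_window_Suc[OF assms(1), of s] by simp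
qed

lemma interior_minority_letter_unique:
  assumes "antipower3_free w" "s + 12 \<le> length w" "kind (window w s 12) = Some c"
    and "0 < a" "a < b" "b < 11"
  shows "w ! (s + a) = c \<or> w ! (s + b) = c"
proof -
  let ?v = "window w s 12"
  have "?v \<in> set (antipower3_free_words 12)"
    using antipower3_free_in_words[OF antipower3_free_window[OF assms(1)]] length_window[OF assms(2)]
    by metis
  then have "\<forall>a \<in> {1..<11}. \<forall>b \<in> {Suc a..<11}. ?v ! a = c \<or> ?v ! b = c"
    using kind_interior_words assms(3) unfolding list_all_iff set_upt by blast
  then have "?v ! a = c \<or> ?v ! b = c" using assms(4-6) by auto
  then show ?thesis using assms(2,5,6) by (simp add: nth_window)
qed

subsection \<open>Upper bound\<close>

lemma power_antipower_free_no_run: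
  assumes "power_antipower_free k r w" "0 < k" "i + k \<le> length w"
  shows "\<exists>j<k. w ! (i + j) \<noteq> c"
proof (rule ccontr)
  assume "\<not> (\<exists>j<k. w ! (i + j) \<noteq> c)"
  then have "window w i k = concat (replicate k [c])"
    using assms(3) by (intro nth_equalityI) (simp_all add: length_window nth_window)
  then have "is_power k (window w i k)" unfolding is_power_def by blast
  with assms(1) is_factor_window show False unfolding power_antipower_free_def by blast
qed

lemma midpoint_run:
  assumes "length w = 2 * k"
    and "\<And>i. i + k \<le> length w \<Longrightarrow> \<exists>j<k. w ! (i + j) \<noteq> c"
  obtains p q where "p < k" "k \<le> q" "q < 2 * k" "w ! p \<noteq> c" "w ! q \<noteq> c"
    "\<forall>i. p < i \<longrightarrow> i < q \<longrightarrow> w ! i = c"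
proof -
  define P Q where "P = {i. i < k \<and> w ! i \<noteq> c}" and "Q = {i. k \<le> i \<and> i < 2 * k \<and> w ! i \<noteq> c}"
  obtain i j where "i < k" "w ! i \<noteq> c" "j < k" "w ! (k + j) \<noteq> c"
    using assms(2)[of 0] assms(2)[of k] assms(1) by auto
  then have "i \<in> P" "k + j \<in> Q" by (simp_all add: P_def Q_def)
  then have "P \<noteq> {}" "Q \<noteq> {}" by auto
  moreover have "finite P" "finite Q" by (simp_all add: P_def Q_def)
  ultimately have "Max P \<in> P" "Min Q \<in> Q" by simp_all
  moreover have "w ! i = c" if "Max P < i" "i < Min Q" for i
  proof (rule ccontr)
    assume "w ! i \<noteq> c"
    show False
    proof (cases "i < k")
      case True
      with \<open>w ! i \<noteq> c\<close> have "i \<in> P" by (simp add: P_def)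
      with \<open>finite P\<close> \<open>Max P < i\<close> show False by (simp add: leD)
    next
      case False
      with \<open>w ! i \<noteq> c\<close> \<open>i < Min Q\<close> \<open>Min Q \<in> Q\<close> have "i \<in> Q" by (simp add: Q_def)
      with \<open>finite Q\<close> \<open>i < Min Q\<close> show False by (simp add: leD)
    qed
  qed
  moreover have "Max P < k" "w ! Max P \<noteq> c" using \<open>Max P \<in> P\<close> by (simp_all add: P_def)
  moreover have "k \<le> Min Q" "Min Q < 2 * k" "w ! Min Q \<noteq> c"
    using \<open>Min Q \<in> Q\<close> by (simp_all add: Q_def)
  ultimately show thesis using that by blast
qed

text \<open>Otherwise both letters lie in the interior of the window starting at \<open>q - 10\<close>.\<close>

lemma minority_letters_apart:
  assumes "antipower3_free w" "12 \<le> length w"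
    and "\<And>s. s + 12 \<le> length w \<Longrightarrow> kind (window w s 12) = Some c"
    and "w ! p \<noteq> c" "w ! q \<noteq> c" "0 < p" "p < q" "q + 2 \<le> length w"
  shows "10 \<le> q - p"
proof (rule ccontr)
  assume "\<not> 10 \<le> q - p"
  define s where "s = q - 10"
  have "s + 12 \<le> length w" "s < p" "q < s + 11"
    using assms(2,6-8) \<open>\<not> 10 \<le> q - p\<close> by (simp_all add: s_def)
  then have "w ! (s + (p - s)) = c \<or> w ! (s + (q - s)) = c"
    using assms(1,3,7) by (intro interior_minority_letter_unique) auto
  moreover have "s + (p - s) = p" "s + (q - s) = q" using \<open>s < p\<close> assms(7) by simp_all
  ultimately show False using assms(4,5) by simp
qed

text \<open>Blocks of length \<open>m = (q - p) div 3 + 1\<close> satisfy \<open>2m < q - p < 3m\<close>; they start at \<open>p\<close>,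
  or as late as \<open>w\<close> allows.\<close>

lemma long_run_not_antipower3_free:
  assumes "length w = 2 * k" "p < k" "q < 2 * k" "w ! p \<noteq> c" "w ! q \<noteq> c"
    and "\<forall>i. p < i \<longrightarrow> i < q \<longrightarrow> w ! i = c" "7 \<le> q - p" "q - p \<le> k"
  shows "\<not> antipower3_free w"
proof -
  define m where "m = (q - p) div 3 + 1"
  define s where "s = min p (2 * k - 3 * m)"
  have "3 * ((q - p) div 3) \<le> q - p" "q - p < 3 * ((q - p) div 3) + 3" by simp_all
  then have m: "2 * m < q - p" "q - p < 3 * m" "3 * m \<le> k + 3"
    using assms(7,8) m_def by linarith+
  have "s \<le> p" "p < s + m" "p + 2 * m < q" "q < s + 3 * m" "s + 3 * m \<le> length w"
    using m assms(1-3) by (auto simp: s_def min_def)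
  then have "antipower3_at w s m" by (rule run_antipower3_at[OF assms(4-6)])
  moreover have "0 < m" by (simp add: m_def)
  ultimately show ?thesis using \<open>s + 3 * m \<le> length w\<close> unfolding antipower3_free_def by blast
qed

lemma double_length_not_power_antipower_free:
  fixes w :: "bool list"
  assumes "9 \<le> k" "length w = 2 * k"
  shows "\<not> power_antipower_free k 3 w"
proof
  assume free: "power_antipower_free k 3 w"
  then have af: "antipower3_free w" by (rule power_antipower_free_antipower3_free)
  have no_run: "\<exists>j<k. w ! (i + j) \<noteq> c" if "i + k \<le> length w" for i c
    using power_antipower_free_no_run[OF free _ that] assms(1) by simp
  have same_kind: "kind (window w s 12) = kind (window w 0 12)" if "s + 12 \<le> length w" for s
    using kind_window_eq[OF af that] .
  show False
  proof (cases "kind (window w 0 12)")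
    case None
    have "alternating (window w s 12)" if "s + 12 \<le> length w" for s
      using same_kind[OF that] None by (simp add: kind_def split: if_splits)
    then have "alternating w" using alternating_windows[of 12 w] assms by simp
    then have "is_power k w" using assms(2) by (rule alternating_is_power)
    with free is_factor_refl show False unfolding power_antipower_free_def by blast
  next
    case (Some c)
    obtain p q where pq: "p < k" "k \<le> q" "q < 2 * k" "w ! p \<noteq> c" "w ! q \<noteq> c"
      and run: "\<forall>i. p < i \<longrightarrow> i < q \<longrightarrow> w ! i = c"
      using midpoint_run[OF assms(2) no_run] by blast
    have kind_c: "kind (window w s 12) = Some c" if "s + 12 \<le> length w" for s
      using same_kind[OF that] Some by simp
    have "7 \<le> q - p"
    proof -
      consider "p = 0" | "length w < q + 2" | "0 < p" "q + 2 \<le> length w" by linarith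
      then show ?thesis
      proof cases
        case 3
        have "p < q" using pq(1,2) by simp
        with minority_letters_apart[OF af _ kind_c pq(4,5) 3(1) _ 3(2)] assms show ?thesis by simp
      qed (use assms pq(1,2) in linarith)+
    qed
    moreover have "q - p \<le> k"
    proof (rule ccontr)
      assume "\<not> q - p \<le> k"
      then have "\<forall>j<k. w ! (Suc p + j) = c" using run by simp
      moreover have "Suc p + k \<le> length w" using pq(1) assms(2) by simp
      ultimately show False using no_run by blast
    qed
    ultimately show False using long_run_not_antipower3_free[OF assms(2) pq(1,3-5) run] af by blast
  qed
qed

theorem theorem7:
  fixes k :: nat
  assumes "k \<ge> 9"
  shows "N k 3 = 2 * k"
proof -
  let ?w = "replicate (k - 1) False @ True # replicate (k - 1) False"
  have "N k 3 = Suc (length ?w)"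
  proof (rule N_eqI)
    show "power_antipower_free k 3 ?w"
      using power_antipower_free_isolated_letter[of k True False] assms by simp
    show "\<not> power_antipower_free k 3 w" if "length w = Suc (length ?w)" for w :: "bool list"
      using double_length_not_power_antipower_free[OF assms] that assms by simp
  qed
  then show ?thesis using assms by simp
qed

end
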